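(* Let $-3<\gamma\le1$ and $0<\varepsilon\le1$. Let $\phi^\varepsilon(t,x)$ satisfy $\sup_{0\le t\le T}\{(1+t)^{5/4}\|\nabla_x\phi^\varepsilon(t)\|_{W^{1,\infty}_x}\}\le\delta$ with $\delta>0$ sufficiently small, and let $(X(\tau;t,x,v),V(\tau;t,x,v))$ be the characteristics $$\frac{\mathrm dX}{\mathrm d\tau}=\frac1\varepsilon V,\quad X(t;t,x,v)=x;\qquad\frac{\mathrm dV}{\mathrm d\tau}=-\nabla_x\phi^\varepsilon(\tau,X(\tau;t,x,v)),\quad V(t;t,x,v)=v.$$ Let $T_0>0$ be a sufficiently small fixed number. Then for $0\le\tau\le t\le\varepsilon^{1/2}T_0$ (within $[0,T]$), $$\frac1{2\varepsilon^3}|t-\tau|^3\le\Big|\det\Big(\frac{\partial X(\tau;t,x,v)}{\partial v}\Big)\Big|\le\frac2{\varepsilon^3}|t-\tau|^3 .$$ *)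

theory Defs
  imports "HOL-Analysis.Analysis"
begin

definition gradx :: "(real \<Rightarrow> real^3 \<Rightarrow> real) \<Rightarrow> real \<Rightarrow> real^3 \<Rightarrow> real^3" where
  "gradx \<phi> t x = (\<chi> i. frechet_derivative (\<phi> t) (at x) (axis i 1))"

text \<open>The smallness assumption
  sup_{0<=t<=T} (1+t)^(5/4) || grad_x phi(t) ||_{W^{1,infinity}} <= delta,
  with the W^{1,infinity} norm of the (C^1) field grad_x phi(t) taken as
  sup_x |grad_x phi(t,x)| + sup_y |D_x grad_x phi(t,y)| (operator norm).\<close>
definition potential_bound :: "real \<Rightarrow> real \<Rightarrow> (real \<Rightarrow> real^3 \<Rightarrow> real) \<Rightarrow> bool" where
  "potential_bound T \<delta> \<phi> \<longleftrightarrow>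
     (\<forall>t\<in>{0..T}. \<forall>x. \<phi> t differentiable (at x) \<and> gradx \<phi> t differentiable (at x)) \<and>
     (\<forall>t\<in>{0..T}. \<forall>x y. (1 + t) powr (5/4) *
         (norm (gradx \<phi> t x) + onorm (frechet_derivative (gradx \<phi> t) (at y))) \<le> \<delta>)"

text \<open>(X(tau;t,x,v), V(tau;t,x,v)) are the characteristics:
  dX/dtau = V/eps, X(t;t,x,v) = x;  dV/dtau = -grad_x phi(tau, X), V(t;t,x,v) = v,
  on the time interval [0,T]; they are assumed differentiable in v
  (so that the Jacobian dX/dv makes sense).\<close>
definition characteristics ::
  "real \<Rightarrow> real \<Rightarrow> (real \<Rightarrow> real^3 \<Rightarrow> real)
   \<Rightarrow> (real \<Rightarrow> real \<Rightarrow> real^3 \<Rightarrow> real^3 \<Rightarrow> real^3)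
   \<Rightarrow> (real \<Rightarrow> real \<Rightarrow> real^3 \<Rightarrow> real^3 \<Rightarrow> real^3) \<Rightarrow> bool" where
  "characteristics \<epsilon> T \<phi> X V \<longleftrightarrow>
     (\<forall>t\<in>{0..T}. \<forall>x v.
        X t t x v = x \<and> V t t x v = v \<and>
        (\<forall>\<tau>\<in>{0..T}.
           ((\<lambda>s. X s t x v) has_vector_derivative ((1 / \<epsilon>) *\<^sub>R V \<tau> t x v)) (at \<tau> within {0..T}) \<and>
           ((\<lambda>s. V s t x v) has_vector_derivative (- gradx \<phi> \<tau> (X \<tau> t x v))) (at \<tau> within {0..T}) \<and>
           (\<lambda>w. X \<tau> t x w) differentiable (at v) \<and>
           (\<lambda>w. V \<tau> t x w) differentiable (at v)))"

definition jac_det_v :: "(real \<Rightarrow> real \<Rightarrow> real^3 \<Rightarrow> real^3 \<Rightarrow> real^3) \<Rightarrow> real \<Rightarrow> real \<Rightarrow> real^3 \<Rightarrow> real^3 \<Rightarrow> real" where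
  "jac_det_v X \<tau> t x v = det (matrix (frechet_derivative (\<lambda>w. X \<tau> t x w) (at v)))"

end

theory Submission
  imports Defs
begin

text \<open>
  For two characteristics started at \<open>v\<close> and \<open>w\<close>, the differences \<open>D = X(w) - X(v)\<close> and
  \<open>U = V(w) - V(v)\<close> satisfy \<open>D' = U / \<epsilon>\<close>, \<open>D(t) = 0\<close>, \<open>U(t) = w - v\<close> and \<open>|U'| \<le> \<delta> |D|\<close>,
  since the field \<open>\<nabla>\<^sub>x\<phi>\<close> is \<open>\<delta>\<close>-Lipschitz. Compared with free flow, \<open>D(s) + ((t - s) / \<epsilon>) U(t)\<close>
  is then bounded by \<open>\<delta> M (t - \<tau>)\<^sup>2 / \<epsilon> \<le> \<delta> M\<close>, where \<open>M = max |D|\<close> on \<open>[\<tau>, t]\<close>; this needs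
  \<open>(t - \<tau>)\<^sup>2 \<le> \<epsilon>\<close>, i.e. \<open>t \<le> \<surd>\<epsilon>\<close>. Absorbing \<open>\<delta> M\<close> gives \<open>M \<le> 2 a |w - v|\<close> with
  \<open>a = (t - \<tau>) / \<epsilon>\<close>, so \<open>w \<mapsto> X(\<tau>) + a w\<close> is \<open>2 \<delta> a\<close>-Lipschitz at \<open>v\<close>. Hence
  \<open>\<partial>X/\<partial>v\<close> differs from \<open>-a I\<close> entrywise by at most \<open>a / 100\<close> for \<open>\<delta> = 1/200\<close>, and the
  determinant of such a \<open>3 \<times> 3\<close> matrix is dominated by its diagonal product \<open>\<approx> -a\<^sup>3\<close>.
\<close>

lemma norm_diff_le_of_vector_derivative_bound:
  fixes f :: "real \<Rightarrow> 'a::real_normed_vector"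
  assumes "a \<le> b"
    and deriv: "\<And>s. s \<in> {a..b} \<Longrightarrow> (f has_vector_derivative f' s) (at s within {a..b})"
    and bound: "\<And>s. s \<in> {a..b} \<Longrightarrow> norm (f' s) \<le> B"
  shows "norm (f b - f a) \<le> B * (b - a)"
proof -
  have "norm (f b - f a) \<le> B * norm (b - a)"
  proof (rule differentiable_bound[where f' = "\<lambda>s h. h *\<^sub>R f' s"])
    show "(f has_derivative (\<lambda>h. h *\<^sub>R f' s)) (at s within {a..b})" if "s \<in> {a..b}" for s
      using deriv[OF that] by (simp add: has_vector_derivative_def)
    show "onorm (\<lambda>h. h *\<^sub>R f' s) \<le> B" if "s \<in> {a..b}" for s
      using bound[OF that] by (simp add: onorm_scaleR_left[OF bounded_linear_ident] onorm_id)
  qed (use assms in auto)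
  then show ?thesis using assms by simp
qed

lemma has_derivative_norm_le_of_lipschitz_at:
  fixes f :: "'a::real_normed_vector \<Rightarrow> 'b::real_normed_vector"
  assumes deriv: "(f has_derivative f') (at v)"
    and lipschitz: "\<And>w. norm (f w - f v) \<le> c * norm (w - v)"
  shows "norm (f' h) \<le> c * norm h"
proof (cases "h = 0")
  case True
  then show ?thesis using deriv has_derivative_linear linear_0 by fastforce
next
  case False
  show ?thesis
  proof (rule field_le_epsilon)
    fix e :: real assume "0 < e"
    with False deriv[unfolded has_derivative_at_alt] obtain r where "r > 0"
      and r: "\<And>y. norm (y - v) < r \<Longrightarrow> norm (f y - f v - f' (y - v)) \<le> (e / norm h) * norm (y - v)"
      by (meson divide_pos_pos zero_less_norm_iff)
    define s where "s = r / (2 * norm h)"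
    have "s > 0" "norm (s *\<^sub>R h) < r" using \<open>r > 0\<close> False by (simp_all add: s_def)
    let ?y = "v + s *\<^sub>R h"
    have "norm (f' (s *\<^sub>R h)) \<le> norm (f ?y - f v) + norm (f ?y - f v - f' (s *\<^sub>R h))"
      using norm_triangle_ineq4[of "f ?y - f v" "f ?y - f v - f' (s *\<^sub>R h)"] by simp
    also have "\<dots> \<le> c * norm (s *\<^sub>R h) + (e / norm h) * norm (s *\<^sub>R h)"
      using lipschitz[of ?y] r[of ?y] \<open>norm (s *\<^sub>R h) < r\<close> by (intro add_mono) simp_all
    finally have "s * norm (f' h) \<le> s * (c * norm h + e)"
      using \<open>s > 0\<close> False
      by (simp add: linear_cmul[OF has_derivative_linear[OF deriv]] algebra_simps)
    then show "norm (f' h) \<le> c * norm h + e" using \<open>s > 0\<close> by simp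
  qed
qed

lemma free_flow_deviation:
  fixes D U :: "real \<Rightarrow> 'a::real_normed_vector"
  assumes "0 < \<epsilon>" "r \<le> t"
    and deriv: "\<And>s. s \<in> {r..t} \<Longrightarrow> (D has_vector_derivative (1/\<epsilon>) *\<^sub>R U s) (at s within {r..t})"
    and bound: "\<And>s. s \<in> {r..t} \<Longrightarrow> norm (U s - U t) \<le> K"
  shows "norm (D r + ((t - r) / \<epsilon>) *\<^sub>R U t - D t) \<le> K / \<epsilon> * (t - r)"
proof -
  define F where "F s = D s + ((t - s) / \<epsilon>) *\<^sub>R U t" for s
  have "norm (F t - F r) \<le> K / \<epsilon> * (t - r)"
  proof (rule norm_diff_le_of_vector_derivative_bound[OF \<open>r \<le> t\<close>])
    fix s assume s: "s \<in> {r..t}"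
    show "(F has_vector_derivative (1/\<epsilon>) *\<^sub>R (U s - U t)) (at s within {r..t})"
      unfolding F_def using deriv[OF s] \<open>0 < \<epsilon>\<close>
      by (auto intro!: derivative_eq_intros simp: algebra_simps divide_simps)
    show "norm ((1/\<epsilon>) *\<^sub>R (U s - U t)) \<le> K / \<epsilon>"
      using bound[OF s] \<open>0 < \<epsilon>\<close> by (simp add: divide_right_mono)
  qed
  then show ?thesis by (simp add: F_def norm_minus_commute)
qed


lemma perturbed_free_flow_estimate:
  fixes D U G :: "real \<Rightarrow> 'a::real_normed_vector"
  assumes "0 < \<epsilon>" "0 \<le> L" "L \<le> 1/2" "\<tau> \<le> t" "(t - \<tau>)^2 \<le> \<epsilon>"
    and dD: "\<And>s. s \<in> {\<tau>..t} \<Longrightarrow> (D has_vector_derivative (1/\<epsilon>) *\<^sub>R U s) (at s within {\<tau>..t})"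
    and dU: "\<And>s. s \<in> {\<tau>..t} \<Longrightarrow> (U has_vector_derivative G s) (at s within {\<tau>..t})"
    and G: "\<And>s. s \<in> {\<tau>..t} \<Longrightarrow> norm (G s) \<le> L * norm (D s)"
    and "D t = 0"
  shows "norm (D \<tau> + ((t - \<tau>) / \<epsilon>) *\<^sub>R U t) \<le> 2 * L * ((t - \<tau>) / \<epsilon>) * norm (U t)"
proof -
  define a where "a = (t - \<tau>) / \<epsilon>"
  have "continuous_on {\<tau>..t} D"
    using dD has_vector_derivative_continuous continuous_on_eq_continuous_within by blast
  then have "continuous_on {\<tau>..t} (\<lambda>s. norm (D s))" by (intro continuous_intros)
  then obtain r0 where r0: "r0 \<in> {\<tau>..t}" and max: "\<And>r. r \<in> {\<tau>..t} \<Longrightarrow> norm (D r) \<le> norm (D r0)"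
    using continuous_attains_sup[of "{\<tau>..t}" "\<lambda>s. norm (D s)"] \<open>\<tau> \<le> t\<close> by auto
  define M where "M = norm (D r0)"
  have "M \<ge> 0" by (simp add: M_def)
  have U_osc: "norm (U s - U t) \<le> L * M * (t - \<tau>)" if s: "s \<in> {\<tau>..t}" for s
  proof -
    have "norm (U t - U s) \<le> L * M * (t - s)"
    proof (rule norm_diff_le_of_vector_derivative_bound)
      fix r assume r: "r \<in> {s..t}"
      with s have "r \<in> {\<tau>..t}" by auto
      then show "(U has_vector_derivative G r) (at r within {s..t})"
        using dU has_vector_derivative_within_subset[of U "G r" r "{\<tau>..t}" "{s..t}"] s by auto
      show "norm (G r) \<le> L * M"
        using G[OF \<open>r \<in> {\<tau>..t}\<close>] max[OF \<open>r \<in> {\<tau>..t}\<close>] \<open>0 \<le> L\<close>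
        unfolding M_def by (meson mult_left_mono order_trans)
    qed (use s in auto)
    also have "\<dots> \<le> L * M * (t - \<tau>)"
      using s \<open>0 \<le> L\<close> \<open>M \<ge> 0\<close> by (intro mult_left_mono) auto
    finally show ?thesis by (simp add: norm_minus_commute)
  qed
  have deviation: "norm (D r + ((t - r) / \<epsilon>) *\<^sub>R U t) \<le> L * M" if r: "r \<in> {\<tau>..t}" for r
  proof -
    have "norm (D r + ((t - r) / \<epsilon>) *\<^sub>R U t) \<le> L * M * (t - \<tau>) / \<epsilon> * (t - r)"
      using free_flow_deviation[OF \<open>0 < \<epsilon>\<close>, of r t D U "L * M * (t - \<tau>)"] r dD U_osc \<open>D t = 0\<close>
        has_vector_derivative_within_subset[of D _ _ "{\<tau>..t}" "{r..t}"]
      by auto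
    also have "\<dots> \<le> L * M * (t - \<tau>) / \<epsilon> * (t - \<tau>)"
      using r \<open>0 \<le> L\<close> \<open>M \<ge> 0\<close> \<open>0 < \<epsilon>\<close> by (intro mult_left_mono) auto
    also have "\<dots> = L * M * ((t - \<tau>)^2 / \<epsilon>)" by (simp add: power2_eq_square)
    also have "\<dots> \<le> L * M"
      using assms(1,2,5) \<open>M \<ge> 0\<close> by (intro mult_right_le_one_le) auto
    finally show ?thesis .
  qed
  have "M \<le> norm (D r0 + ((t - r0) / \<epsilon>) *\<^sub>R U t) + norm (((t - r0) / \<epsilon>) *\<^sub>R U t)"
    unfolding M_def by (metis add_diff_cancel norm_triangle_ineq4)
  also have "norm (((t - r0) / \<epsilon>) *\<^sub>R U t) \<le> a * norm (U t)"
    using r0 \<open>0 < \<epsilon>\<close> unfolding a_def by (auto intro!: mult_right_mono divide_right_mono)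
  finally have "M \<le> L * M + a * norm (U t)" using deviation[OF r0] by linarith
  then have "M \<le> 2 * a * norm (U t)"
    using \<open>L \<le> 1/2\<close> \<open>M \<ge> 0\<close> mult_right_mono[of L "1/2" M] by linarith
  then have "L * M \<le> L * (2 * a * norm (U t))" using \<open>0 \<le> L\<close> by (rule mult_left_mono)
  with deviation[of \<tau>] \<open>\<tau> \<le> t\<close> show ?thesis
    unfolding a_def[symmetric] by (simp add: ac_simps)
qed

lemma det_3_bounds_near_diagonal:
  fixes M :: "real^3^3" and a c :: real
  assumes "0 \<le> c" "c \<le> a"
    and diag: "\<And>i. a - c \<le> \<bar>M $ i $ i\<bar> \<and> \<bar>M $ i $ i\<bar> \<le> a + c"
    and off_diag: "\<And>i j. i \<noteq> j \<Longrightarrow> \<bar>M $ i $ j\<bar> \<le> c"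
  shows "(a - c)^3 - 5 * (a + c) * c^2 \<le> \<bar>det M\<bar>"
    and "\<bar>det M\<bar> \<le> (a + c)^3 + 5 * (a + c) * c^2"
proof -
  have prod3: "\<bar>x * y * z\<bar> \<le> X * Y * Z" if "\<bar>x\<bar> \<le> X" "\<bar>y\<bar> \<le> Y" "\<bar>z\<bar> \<le> Z"
    for x y z X Y Z :: real
    using that by (simp add: abs_mult mult_mono')
  define p where "p = M$1$1 * M$2$2 * M$3$3"
  have "(a - c)^3 \<le> \<bar>p\<bar>" "\<bar>p\<bar> \<le> (a + c)^3"
    using diag[of 1] diag[of 2] diag[of 3] assms(1,2)
    by (auto simp: p_def abs_mult power3_eq_cube intro!: mult_mono)
  moreover have "\<bar>det M - p\<bar> \<le> 5 * (a + c) * c^2"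
  proof -
    have "\<bar>M $ i $ i\<bar> \<le> a + c" for i using diag by blast
    then have
      "\<bar>M$1$2 * M$2$3 * M$3$1\<bar> \<le> c * c * c" "\<bar>M$1$3 * M$2$1 * M$3$2\<bar> \<le> c * c * c"
      "\<bar>M$1$1 * M$2$3 * M$3$2\<bar> \<le> (a + c) * c * c" "\<bar>M$1$2 * M$2$1 * M$3$3\<bar> \<le> c * c * (a + c)"
      "\<bar>M$1$3 * M$2$2 * M$3$1\<bar> \<le> c * (a + c) * c"
      by (intro prod3 off_diag; simp)+
    moreover have "c * c * c \<le> (a + c) * c * c"
      using assms(1,2) by (intro mult_right_mono) auto
    ultimately have "\<bar>M$1$2 * M$2$3 * M$3$1\<bar> \<le> (a + c) * c * c" "\<bar>M$1$3 * M$2$1 * M$3$2\<bar> \<le> (a + c) * c * c"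
      "\<bar>M$1$1 * M$2$3 * M$3$2\<bar> \<le> (a + c) * c * c" "\<bar>M$1$2 * M$2$1 * M$3$3\<bar> \<le> (a + c) * c * c"
      "\<bar>M$1$3 * M$2$2 * M$3$1\<bar> \<le> (a + c) * c * c"
      by (simp_all add: ac_simps)
    then show ?thesis
      unfolding det_3 p_def power2_eq_square by arith
  qed
  ultimately show "(a - c)^3 - 5 * (a + c) * c^2 \<le> \<bar>det M\<bar>"
    and "\<bar>det M\<bar> \<le> (a + c)^3 + 5 * (a + c) * c^2"
    by linarith+
qed

lemma abs_det_frechet_derivative_near_neg_scalar:
  fixes f :: "real^3 \<Rightarrow> real^3"
  assumes "f differentiable (at v)" "0 \<le> a" "c \<le> a / 100"
    and near: "\<And>w. norm ((f w + a *\<^sub>R w) - (f v + a *\<^sub>R v)) \<le> c * norm (w - v)"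
  shows "a^3 / 2 \<le> \<bar>det (matrix (frechet_derivative f (at v)))\<bar>"
    and "\<bar>det (matrix (frechet_derivative f (at v)))\<bar> \<le> 2 * a^3"
proof -
  define A where "A = frechet_derivative f (at v)"
  have "((\<lambda>w. f w + a *\<^sub>R w) has_derivative (\<lambda>h. A h + a *\<^sub>R h)) (at v)"
    using assms(1) unfolding A_def by (intro derivative_intros) (simp add: frechet_derivative_works)
  then have A_near: "norm (A h + a *\<^sub>R h) \<le> c * norm h" for h
    using near by (rule has_derivative_norm_le_of_lipschitz_at)
  have entry: "\<bar>matrix A $ i $ j + (if i = j then a else 0)\<bar> \<le> c" for i j
  proof -
    have "matrix A $ i $ j + (if i = j then a else 0) = (A (axis j 1) + a *\<^sub>R axis j 1) $ i"
      by (simp add: matrix_def axis_def)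
    also have "\<bar>\<dots>\<bar> \<le> norm (A (axis j 1) + a *\<^sub>R axis j 1)" by (rule component_le_norm_cart)
    also have "\<dots> \<le> c" using A_near[of "axis j 1"] by simp
    finally show ?thesis .
  qed
  have "0 \<le> c" using entry[of 1 2] by simp
  have "a - c \<le> \<bar>matrix A $ i $ i\<bar> \<and> \<bar>matrix A $ i $ i\<bar> \<le> a + c" for i
    using entry[of i i] \<open>0 \<le> a\<close> by (simp; arith)
  moreover have "\<bar>matrix A $ i $ j\<bar> \<le> c" if "i \<noteq> j" for i j
    using entry[of i j] that by simp
  moreover have "c \<le> a" using assms(2,3) by linarith
  ultimately have "(a - c)^3 - 5 * (a + c) * c^2 \<le> \<bar>det (matrix A)\<bar>"
    "\<bar>det (matrix A)\<bar> \<le> (a + c)^3 + 5 * (a + c) * c^2"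
    using det_3_bounds_near_diagonal[OF \<open>0 \<le> c\<close>] by blast+
  moreover have "a^3 / 2 \<le> (a - c)^3 - 5 * (a + c) * c^2" "(a + c)^3 + 5 * (a + c) * c^2 \<le> 2 * a^3"
  proof -
    have "(99/100 * a)^3 \<le> (a - c)^3" "(a + c)^3 \<le> (101/100 * a)^3"
      using assms(2,3) \<open>0 \<le> c\<close> by (intro power_mono; simp)+
    moreover have "5 * (a + c) * c^2 \<le> 5 * (101/100 * a) * (a / 100)^2"
      using assms(2,3) \<open>0 \<le> c\<close> by (intro mult_mono power_mono) auto
    moreover have "0 \<le> a^3" using assms(2) by simp
    ultimately show "a^3 / 2 \<le> (a - c)^3 - 5 * (a + c) * c^2" "(a + c)^3 + 5 * (a + c) * c^2 \<le> 2 * a^3"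
      by (simp_all add: power_mult_distrib power2_eq_square power3_eq_cube)
  qed
  ultimately show "a^3 / 2 \<le> \<bar>det (matrix A)\<bar>" "\<bar>det (matrix A)\<bar> \<le> 2 * a^3"
    by linarith+
qed

lemma potential_bound_gradx_lipschitz:
  assumes "potential_bound T \<delta> \<phi>" "r \<in> {0..T}"
  shows "norm (gradx \<phi> r y - gradx \<phi> r z) \<le> \<delta> * norm (y - z)"
proof (rule differentiable_bound[where S = UNIV and f' = "\<lambda>y. frechet_derivative (gradx \<phi> r) (at y)"])
  fix y :: "real^3"
  have deriv: "(gradx \<phi> r has_derivative frechet_derivative (gradx \<phi> r) (at y)) (at y)"
    using assms unfolding potential_bound_def by (simp add: frechet_derivative_works)
  then show "(gradx \<phi> r has_derivative frechet_derivative (gradx \<phi> r) (at y)) (at y within UNIV)"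
    by simp
  let ?N = "norm (gradx \<phi> r y) + onorm (frechet_derivative (gradx \<phi> r) (at y))"
  have "0 \<le> onorm (frechet_derivative (gradx \<phi> r) (at y))"
    using deriv has_derivative_bounded_linear onorm_pos_le by blast
  then have "0 \<le> ?N" by simp
  moreover have "1 \<le> (1 + r) powr (5/4)" using assms(2) by (intro ge_one_powr_ge_zero) auto
  ultimately have "?N \<le> (1 + r) powr (5/4) * ?N"
    using mult_right_mono[of 1 "(1 + r) powr (5/4)" ?N] by simp
  also have "\<dots> \<le> \<delta>" using assms unfolding potential_bound_def by blast
  finally show "onorm (frechet_derivative (gradx \<phi> r) (at y)) \<le> \<delta>"
    using norm_ge_zero[of "gradx \<phi> r y"] by linarith
qed auto

lemma characteristics_near_free_flow:
  assumes "0 < \<epsilon>" "potential_bound T \<delta> \<phi>" "0 \<le> \<delta>" "\<delta> \<le> 1/2" "characteristics \<epsilon> T \<phi> X V"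
    and "0 \<le> \<tau>" "\<tau> \<le> t" "t \<le> T" "(t - \<tau>)^2 \<le> \<epsilon>"
  shows "norm ((X \<tau> t x w + ((t - \<tau>) / \<epsilon>) *\<^sub>R w) - (X \<tau> t x v + ((t - \<tau>) / \<epsilon>) *\<^sub>R v))
           \<le> 2 * \<delta> * ((t - \<tau>) / \<epsilon>) * norm (w - v)"
proof -
  have sub: "{\<tau>..t} \<subseteq> {0..T}" using assms(6,8) by auto
  have char: "\<And>s u. s \<in> {0..T} \<Longrightarrow>
      ((\<lambda>r. X r t x u) has_vector_derivative (1 / \<epsilon>) *\<^sub>R V s t x u) (at s within {0..T}) \<and>
      ((\<lambda>r. V r t x u) has_vector_derivative - gradx \<phi> s (X s t x u)) (at s within {0..T})"
    and initial: "\<And>u. X t t x u = x \<and> V t t x u = u"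
    using assms(5-8) unfolding characteristics_def by auto
  define D where "D s = X s t x w - X s t x v" for s
  define U where "U s = V s t x w - V s t x v" for s
  define G where "G s = gradx \<phi> s (X s t x v) - gradx \<phi> s (X s t x w)" for s
  have "norm (D \<tau> + ((t - \<tau>) / \<epsilon>) *\<^sub>R U t) \<le> 2 * \<delta> * ((t - \<tau>) / \<epsilon>) * norm (U t)"
  proof (rule perturbed_free_flow_estimate[OF assms(1,3,4,7,9)])
    fix s assume "s \<in> {\<tau>..t}"
    then have s: "s \<in> {0..T}" using sub by auto
    show "(D has_vector_derivative (1 / \<epsilon>) *\<^sub>R U s) (at s within {\<tau>..t})"
      unfolding D_def U_def scaleR_diff_right using char[OF s, of w] char[OF s, of v] sub
      by (auto intro!: has_vector_derivative_diff intro: has_vector_derivative_within_subset)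
    show "(U has_vector_derivative G s) (at s within {\<tau>..t})"
      unfolding U_def G_def using char[OF s, of w] char[OF s, of v] sub
      by (auto intro!: has_vector_derivative_diff[where f' = "- _" and g' = "- _", simplified]
               intro: has_vector_derivative_within_subset)
    show "norm (G s) \<le> \<delta> * norm (D s)"
      unfolding G_def D_def using potential_bound_gradx_lipschitz[OF assms(2) s]
      by (simp add: norm_minus_commute)
  qed (simp add: D_def initial)
  then show ?thesis by (simp add: D_def U_def initial algebra_simps)
qed

theorem lemma3p4:
  fixes \<gamma> :: real
  assumes "-3 < \<gamma>" and "\<gamma> \<le> 1"
  shows "\<exists>\<delta>>0. \<exists>T0>0. \<forall>(\<epsilon>::real) (T::real) (\<phi>::real \<Rightarrow> real^3 \<Rightarrow> real)
            (X::real \<Rightarrow> real \<Rightarrow> real^3 \<Rightarrow> real^3 \<Rightarrow> real^3)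
            (V::real \<Rightarrow> real \<Rightarrow> real^3 \<Rightarrow> real^3 \<Rightarrow> real^3).
     0 < \<epsilon> \<and> \<epsilon> \<le> 1 \<and> potential_bound T \<delta> \<phi> \<and> characteristics \<epsilon> T \<phi> X V \<longrightarrow>
     (\<forall>\<tau> t x v. 0 \<le> \<tau> \<and> \<tau> \<le> t \<and> t \<le> sqrt \<epsilon> * T0 \<and> t \<le> T \<longrightarrow>
        1 / (2 * \<epsilon> ^ 3) * \<bar>t - \<tau>\<bar> ^ 3 \<le> \<bar>jac_det_v X \<tau> t x v\<bar> \<and>
        \<bar>jac_det_v X \<tau> t x v\<bar> \<le> 2 / \<epsilon> ^ 3 * \<bar>t - \<tau>\<bar> ^ 3)"
proof (rule exI[of _ "1/200"], intro conjI exI[of _ "1::real"] allI impI)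
  fix \<epsilon> T :: real and \<phi> :: "real \<Rightarrow> real^3 \<Rightarrow> real"
    and X V :: "real \<Rightarrow> real \<Rightarrow> real^3 \<Rightarrow> real^3 \<Rightarrow> real^3" and \<tau> t :: real and x v :: "real^3"
  assume H: "0 < \<epsilon> \<and> \<epsilon> \<le> 1 \<and> potential_bound T (1/200) \<phi> \<and> characteristics \<epsilon> T \<phi> X V"
    and R: "0 \<le> \<tau> \<and> \<tau> \<le> t \<and> t \<le> sqrt \<epsilon> * 1 \<and> t \<le> T"
  define a where "a = (t - \<tau>) / \<epsilon>"
  have "(t - \<tau>)^2 \<le> (sqrt \<epsilon>)^2" using R by (intro power_mono) auto
  then have "(t - \<tau>)^2 \<le> \<epsilon>" using H by simp
  then have "norm ((X \<tau> t x w + a *\<^sub>R w) - (X \<tau> t x v + a *\<^sub>R v)) \<le> a / 100 * norm (w - v)" for w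
    using characteristics_near_free_flow[of \<epsilon> T "1/200" \<phi> X V \<tau> t x w v] H R by (simp add: a_def)
  moreover have "(\<lambda>w. X \<tau> t x w) differentiable (at v)"
    using H R unfolding characteristics_def by auto
  moreover have "0 \<le> a" using H R by (simp add: a_def)
  ultimately have "a^3 / 2 \<le> \<bar>jac_det_v X \<tau> t x v\<bar>" "\<bar>jac_det_v X \<tau> t x v\<bar> \<le> 2 * a^3"
    unfolding jac_det_v_def using abs_det_frechet_derivative_near_neg_scalar[of "\<lambda>w. X \<tau> t x w" v a "a / 100"]
    by auto
  moreover have "a^3 = \<bar>t - \<tau>\<bar>^3 / \<epsilon>^3" using R by (simp add: a_def power_divide)
  ultimately show "1 / (2 * \<epsilon> ^ 3) * \<bar>t - \<tau>\<bar> ^ 3 \<le> \<bar>jac_det_v X \<tau> t x v\<bar>"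
    and "\<bar>jac_det_v X \<tau> t x v\<bar> \<le> 2 / \<epsilon> ^ 3 * \<bar>t - \<tau>\<bar> ^ 3"
    by simp_all
qed simp_all

end
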